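(* There are universal constants $c,C>0$ with the following property. Let $(\Omega,Q,\pi)$ be a reversible Markov chain on a finite set $\Omega$ and $K>0$. Suppose ${\rm Ent}_\pi(f)\le K\,\mathcal E_\pi(f,\log f)$ for every positive function $f$ on $\Omega$ with $f(\omega)\ge c$ for all $\omega\in\Omega$ and $\mathbb E_\pi f=1$. Then $(\Omega,Q,\pi)$ satisfies the MLSI with constant $CK$, i.e. ${\rm Ent}_\pi(f)\le CK\,\mathcal E_\pi(f,\log f)$ for all $f:\Omega\to(0,\infty)$.
   Context: ${\rm Ent}_\pi(f):=\mathbb E_\pi[f(\log f-\log\mathbb E_\pi f)]$ and $\mathcal E_\pi(f,\log f):=\frac12\sum_{\omega,\omega'\in\Omega}\pi(\omega)Q(\omega,\omega')(f(\omega)-f(\omega'))\log\frac{f(\omega)}{f(\omega')}$. *)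

theory Defs
  imports Complex_Main
begin

definition reversible_chain :: "'a set \<Rightarrow> ('a \<Rightarrow> 'a \<Rightarrow> real) \<Rightarrow> ('a \<Rightarrow> real) \<Rightarrow> bool" where
  "reversible_chain \<Omega> Q \<pi> \<longleftrightarrow>
     finite \<Omega> \<and> \<Omega> \<noteq> {} \<and>
     (\<forall>w\<in>\<Omega>. \<pi> w > 0) \<and> (\<Sum>w\<in>\<Omega>. \<pi> w) = 1 \<and>
     (\<forall>w\<in>\<Omega>. \<forall>w'\<in>\<Omega>. w \<noteq> w' \<longrightarrow> Q w w' \<ge> 0) \<and>
     (\<forall>w\<in>\<Omega>. (\<Sum>w'\<in>\<Omega>. Q w w') = 0) \<and>
     (\<forall>w\<in>\<Omega>. \<forall>w'\<in>\<Omega>. \<pi> w * Q w w' = \<pi> w' * Q w' w)"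

definition expect :: "'a set \<Rightarrow> ('a \<Rightarrow> real) \<Rightarrow> ('a \<Rightarrow> real) \<Rightarrow> real" where
  "expect \<Omega> \<pi> f = (\<Sum>w\<in>\<Omega>. \<pi> w * f w)"

definition Ent :: "'a set \<Rightarrow> ('a \<Rightarrow> real) \<Rightarrow> ('a \<Rightarrow> real) \<Rightarrow> real" where
  "Ent \<Omega> \<pi> f = expect \<Omega> \<pi> (\<lambda>w. f w * (ln (f w) - ln (expect \<Omega> \<pi> f)))"

definition dirichlet_log :: "'a set \<Rightarrow> ('a \<Rightarrow> 'a \<Rightarrow> real) \<Rightarrow> ('a \<Rightarrow> real) \<Rightarrow> ('a \<Rightarrow> real) \<Rightarrow> real" where
  "dirichlet_log \<Omega> Q \<pi> f =
     (1/2) * (\<Sum>w\<in>\<Omega>. \<Sum>w'\<in>\<Omega>. \<pi> w * Q w w' * (f w - f w') * ln (f w / f w'))"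

end

theory Submission imports Defs begin

text \<open>Normalise f to mean one and mix it with the constant 1: g = (f + 1)/2 satisfies
  g \<ge> 1/2 and still has mean one. Pointwise the entropy density x ln x - x + 1 at x is
  at most 8 times its value at (x + 1)/2, so Ent f \<le> 8 Ent g; on the other side,
  adding a positive constant can only decrease each term (a - b) ln(a/b) of the
  Dirichlet form, so the Dirichlet form of g is at most half that of f. Hence the
  restricted inequality for g yields the full one for f with constant 4K.\<close>

definition xlogx_bregman :: "real \<Rightarrow> real" where
  "xlogx_bregman x = x * ln x - x + 1"

lemma xlogx_bregman_ge_quadratic:
  fixes y :: real assumes "0 < y" "y \<le> 1"
  shows "(1 - y)^2 / 2 \<le> xlogx_bregman y"
proof -
  let ?k = "\<lambda>t::real. t * ln t - t + 1 - (1 - t)^2 / 2"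
  have "?k 1 \<le> ?k y"
  proof (rule DERIV_nonpos_imp_nonincreasing[OF assms(2)])
    fix t assume t: "y \<le> t" "t \<le> 1"
    hence tp: "t > 0" using assms by linarith
    have "DERIV ?k t :> ln t + 1 - t"
      using tp by (auto intro!: derivative_eq_intros simp: field_simps power2_eq_square)
    moreover have "ln t + 1 - t \<le> 0" using ln_le_minus_one[OF tp] by linarith
    ultimately show "\<exists>d. DERIV ?k t :> d \<and> d \<le> 0" by blast
  qed
  thus ?thesis by (simp add: xlogx_bregman_def)
qed

lemma DERIV_xlogx_bregman: "t > 0 \<Longrightarrow> DERIV xlogx_bregman t :> ln t"
  unfolding xlogx_bregman_def by (auto intro!: derivative_eq_intros)

lemma xlogx_bregman_dilate_le:
  fixes u :: real assumes "1 \<le> u"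
  shows "xlogx_bregman (2 * u - 1) \<le> 8 * xlogx_bregman u"
proof -
  let ?h = "\<lambda>t. 8 * xlogx_bregman t - xlogx_bregman (2 * t - 1)"
  have "?h 1 \<le> ?h u"
  proof (rule DERIV_nonneg_imp_nondecreasing[OF assms])
    fix t :: real assume t: "1 \<le> t" "t \<le> u"
    hence tp: "t > 0" "2 * t - 1 > 0" by linarith+
    have inner: "DERIV (\<lambda>t. 2 * t - 1) t :> 2" by (auto intro!: derivative_eq_intros)
    have "DERIV ?h t :> 8 * ln t - ln (2 * t - 1) * 2"
      using DERIV_cmult[OF DERIV_xlogx_bregman[OF tp(1)], of 8]
        DERIV_chain2[OF DERIV_xlogx_bregman[OF tp(2)] inner]
      by (auto intro: DERIV_diff)
    moreover have "ln (2 * t - 1) \<le> 2 * ln t"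
    proof -
      have "2 * t - 1 \<le> t^2" using zero_le_power2[of "t - 1"]
        by (simp add: power2_eq_square algebra_simps)
      hence "ln (2 * t - 1) \<le> ln (t^2)" using tp by simp
      thus ?thesis using tp by (simp add: ln_realpow)
    qed
    moreover have "ln t \<ge> 0" using t by simp
    ultimately show "\<exists>d. DERIV ?h t :> d \<and> d \<ge> 0" by (intro exI) auto
  qed
  thus ?thesis by (simp add: xlogx_bregman_def)
qed

lemma xlogx_bregman_le_midpoint:
  fixes x :: real assumes "0 < x"
  shows "xlogx_bregman x \<le> 8 * xlogx_bregman ((x + 1) / 2)"
proof (cases "x \<le> 1")
  case True
  have "x * ln x \<le> x * (x - 1)"
    using ln_le_minus_one[OF assms] assms by (simp add: mult_left_mono)
  hence "xlogx_bregman x \<le> 4 * (1 - (x + 1) / 2)^2"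
    by (simp add: xlogx_bregman_def power2_eq_square algebra_simps)
  also have "\<dots> \<le> 8 * xlogx_bregman ((x + 1) / 2)"
    using xlogx_bregman_ge_quadratic[of "(x + 1) / 2"] assms True by simp
  finally show ?thesis .
next
  case False
  have "2 * ((x + 1) / 2) - 1 = x" by (simp add: field_simps)
  with False show ?thesis using xlogx_bregman_dilate_le[of "(x + 1) / 2"] by simp
qed

lemma shift_log_ratio_le:
  fixes a b s :: real assumes "a > 0" "b > 0" "s \<ge> 0"
  shows "(a - b) * ln ((a + s) / (b + s)) \<le> (a - b) * ln (a / b)"
proof (cases "a \<ge> b")
  case True
  have "(a + s) / (b + s) \<le> a / b" using assms True by (simp add: field_simps mult_right_mono)
  thus ?thesis using assms True by (simp add: mult_left_mono)
next
  case False
  have "(a + s) / (b + s) \<ge> a / b" using assms False by (simp add: field_simps mult_right_mono)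
  thus ?thesis using assms False by (simp add: mult_left_mono_neg)
qed

lemma expect_scale: "expect \<Omega> \<pi> (\<lambda>w. c * f w) = c * expect \<Omega> \<pi> f"
  unfolding expect_def by (simp add: sum_distrib_left algebra_simps)

lemma expect_midpoint:
  assumes "(\<Sum>w\<in>\<Omega>. \<pi> w) = 1"
  shows "expect \<Omega> \<pi> (\<lambda>w. (f w + 1) / 2) = (expect \<Omega> \<pi> f + 1) / 2"
  using assms by (simp add: expect_def add_divide_distrib sum.distrib
      sum_divide_distrib[symmetric] distrib_left)

lemma Ent_scale:
  assumes "c > 0" "expect \<Omega> \<pi> f > 0" "\<forall>w\<in>\<Omega>. f w > 0"
  shows "Ent \<Omega> \<pi> (\<lambda>w. c * f w) = c * Ent \<Omega> \<pi> f"
proof -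
  define m where "m = expect \<Omega> \<pi> f"
  have "ln (c * m) = ln c + ln m" using assms(1,2) unfolding m_def by (rule ln_mult_pos)
  moreover have "ln (c * f w) = ln c + ln (f w)" if "w \<in> \<Omega>" for w
    using assms(1) assms(3)[rule_format, OF that] by (rule ln_mult_pos)
  ultimately have "expect \<Omega> \<pi> (\<lambda>w. c * f w * (ln (c * f w) - ln (c * m)))
      = expect \<Omega> \<pi> (\<lambda>w. c * (f w * (ln (f w) - ln m)))"
    unfolding expect_def by (intro sum.cong) (auto simp: algebra_simps)
  then show ?thesis unfolding Ent_def expect_scale m_def by simp
qed

lemma Ent_eq_sum_xlogx_bregman:
  assumes "(\<Sum>w\<in>\<Omega>. \<pi> w) = 1" "expect \<Omega> \<pi> f = 1"
  shows "Ent \<Omega> \<pi> f = (\<Sum>w\<in>\<Omega>. \<pi> w * xlogx_bregman (f w))"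
proof -
  have "(\<Sum>w\<in>\<Omega>. \<pi> w * xlogx_bregman (f w))
      = (\<Sum>w\<in>\<Omega>. \<pi> w * (f w * ln (f w))) - (\<Sum>w\<in>\<Omega>. \<pi> w * f w) + (\<Sum>w\<in>\<Omega>. \<pi> w)"
    unfolding xlogx_bregman_def by (simp add: sum.distrib sum_subtractf algebra_simps)
  then show ?thesis using assms by (simp add: Ent_def expect_def)
qed

lemma Ent_le_Ent_midpoint:
  assumes "(\<Sum>w\<in>\<Omega>. \<pi> w) = 1" "\<forall>w\<in>\<Omega>. \<pi> w \<ge> 0" "\<forall>w\<in>\<Omega>. f w > 0"
    and "expect \<Omega> \<pi> f = 1"
  shows "Ent \<Omega> \<pi> f \<le> 8 * Ent \<Omega> \<pi> (\<lambda>w. (f w + 1) / 2)"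
proof -
  have "expect \<Omega> \<pi> (\<lambda>w. (f w + 1) / 2) = 1"
    using assms(4) expect_midpoint[OF assms(1), of f] by simp
  then have "8 * Ent \<Omega> \<pi> (\<lambda>w. (f w + 1) / 2)
      = (\<Sum>w\<in>\<Omega>. \<pi> w * (8 * xlogx_bregman ((f w + 1) / 2)))"
    using assms(1) by (simp add: Ent_eq_sum_xlogx_bregman sum_distrib_left algebra_simps)
  moreover have "Ent \<Omega> \<pi> f = (\<Sum>w\<in>\<Omega>. \<pi> w * xlogx_bregman (f w))"
    using assms(1,4) by (rule Ent_eq_sum_xlogx_bregman)
  moreover have "(\<Sum>w\<in>\<Omega>. \<pi> w * xlogx_bregman (f w))
      \<le> (\<Sum>w\<in>\<Omega>. \<pi> w * (8 * xlogx_bregman ((f w + 1) / 2)))"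
    using assms(2,3) by (intro sum_mono mult_left_mono xlogx_bregman_le_midpoint) auto
  ultimately show ?thesis by simp
qed

lemma dirichlet_log_scale:
  "dirichlet_log \<Omega> Q \<pi> (\<lambda>w. c * f w) = c * dirichlet_log \<Omega> Q \<pi> f"
proof (cases "c = 0")
  case False
  then show ?thesis
    unfolding dirichlet_log_def sum_distrib_left by (intro arg_cong[where f = "(*) _"]
        sum.cong refl) (simp add: algebra_simps)
qed (simp add: dirichlet_log_def)

lemma dirichlet_log_shift_le:
  assumes "\<forall>w\<in>\<Omega>. \<pi> w \<ge> 0" "\<forall>w\<in>\<Omega>. \<forall>w'\<in>\<Omega>. w \<noteq> w' \<longrightarrow> Q w w' \<ge> 0"
    and "\<forall>w\<in>\<Omega>. f w > 0" "s \<ge> 0"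
  shows "dirichlet_log \<Omega> Q \<pi> (\<lambda>w. f w + s) \<le> dirichlet_log \<Omega> Q \<pi> f"
  unfolding dirichlet_log_def
proof (intro mult_left_mono sum_mono)
  fix w w' assume w: "w \<in> \<Omega>" "w' \<in> \<Omega>"
  show "\<pi> w * Q w w' * (f w + s - (f w' + s)) * ln ((f w + s) / (f w' + s))
      \<le> \<pi> w * Q w w' * (f w - f w') * ln (f w / f w')"
  proof (cases "w = w'")
    case False
    then have "\<pi> w * Q w w' \<ge> 0" using assms(1,2) w by simp
    moreover have "(f w - f w') * ln ((f w + s) / (f w' + s)) \<le> (f w - f w') * ln (f w / f w')"
      using assms(3,4) w by (intro shift_log_ratio_le) auto
    ultimately have "\<pi> w * Q w w' * ((f w - f w') * ln ((f w + s) / (f w' + s)))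
        \<le> \<pi> w * Q w w' * ((f w - f w') * ln (f w / f w'))"
      by (metis mult_left_mono)
    then show ?thesis by (simp add: mult.assoc)
  qed simp
qed simp

lemma dirichlet_log_midpoint_le:
  assumes "\<forall>w\<in>\<Omega>. \<pi> w \<ge> 0" "\<forall>w\<in>\<Omega>. \<forall>w'\<in>\<Omega>. w \<noteq> w' \<longrightarrow> Q w w' \<ge> 0"
    and "\<forall>w\<in>\<Omega>. f w > 0"
  shows "dirichlet_log \<Omega> Q \<pi> (\<lambda>w. (f w + 1) / 2) \<le> dirichlet_log \<Omega> Q \<pi> f / 2"
  using dirichlet_log_scale[of \<Omega> Q \<pi> "1/2" "\<lambda>w. f w + 1"]
    dirichlet_log_shift_le[OF assms, of 1]
  by simp

lemma mlsi_from_restricted_mlsi: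
  assumes chain: "reversible_chain \<Omega> Q \<pi>" and K: "K \<ge> 0"
    and restricted: "\<forall>g. (\<forall>w\<in>\<Omega>. g w > 0 \<and> g w \<ge> 1/2) \<longrightarrow> expect \<Omega> \<pi> g = 1 \<longrightarrow>
            Ent \<Omega> \<pi> g \<le> K * dirichlet_log \<Omega> Q \<pi> g"
    and f_pos: "\<forall>w\<in>\<Omega>. f w > 0"
  shows "Ent \<Omega> \<pi> f \<le> 4 * K * dirichlet_log \<Omega> Q \<pi> f"
proof -
  have fin: "finite \<Omega>" and ne: "\<Omega> \<noteq> {}" and \<pi>_pos: "\<forall>w\<in>\<Omega>. \<pi> w > 0"
    and \<pi>_sum: "(\<Sum>w\<in>\<Omega>. \<pi> w) = 1"
    and Q_nonneg: "\<forall>w\<in>\<Omega>. \<forall>w'\<in>\<Omega>. w \<noteq> w' \<longrightarrow> Q w w' \<ge> 0"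
    using chain unfolding reversible_chain_def by auto
  have \<pi>_nonneg: "\<forall>w\<in>\<Omega>. \<pi> w \<ge> 0" using \<pi>_pos by auto
  define m where "m = expect \<Omega> \<pi> f"
  have m_pos: "m > 0"
    unfolding m_def expect_def using fin ne \<pi>_pos f_pos by (intro sum_pos) auto
  define h where "h = (\<lambda>w. f w / m)"
  have h_pos: "\<forall>w\<in>\<Omega>. h w > 0" using f_pos m_pos by (simp add: h_def)
  have f_eq: "f = (\<lambda>w. m * h w)" using m_pos by (simp add: h_def)
  have h_mean: "expect \<Omega> \<pi> h = 1"
    using expect_scale[of \<Omega> \<pi> "1/m" f] m_pos by (simp add: h_def m_def)
  let ?g = "\<lambda>w. (h w + 1) / 2"
  have "Ent \<Omega> \<pi> h \<le> 8 * Ent \<Omega> \<pi> ?g"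
    using Ent_le_Ent_midpoint[OF \<pi>_sum \<pi>_nonneg h_pos h_mean] .
  also have "Ent \<Omega> \<pi> ?g \<le> K * dirichlet_log \<Omega> Q \<pi> ?g"
  proof -
    have "\<forall>w\<in>\<Omega>. ?g w > 0 \<and> ?g w \<ge> 1/2" using h_pos by auto
    moreover have "expect \<Omega> \<pi> ?g = 1" using h_mean expect_midpoint[OF \<pi>_sum, of h] by simp
    ultimately show ?thesis using restricted[rule_format, of ?g] by simp
  qed
  also have "K * dirichlet_log \<Omega> Q \<pi> ?g \<le> K * (dirichlet_log \<Omega> Q \<pi> h / 2)"
    using dirichlet_log_midpoint_le[OF \<pi>_nonneg Q_nonneg h_pos] K by (rule mult_left_mono)
  finally have "Ent \<Omega> \<pi> h \<le> 4 * K * dirichlet_log \<Omega> Q \<pi> h" by simp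
  then show ?thesis
    using m_pos h_mean h_pos by (simp add: f_eq Ent_scale dirichlet_log_scale)
qed

theorem mainTheorem7:
  shows "\<exists>c C :: real. c > 0 \<and> C > 0 \<and>
    (\<forall>(\<Omega> :: nat set) (Q :: nat \<Rightarrow> nat \<Rightarrow> real) (\<pi> :: nat \<Rightarrow> real) (K :: real).
       reversible_chain \<Omega> Q \<pi> \<longrightarrow> K > 0 \<longrightarrow>
       (\<forall>f. (\<forall>w\<in>\<Omega>. f w > 0 \<and> f w \<ge> c) \<longrightarrow> expect \<Omega> \<pi> f = 1 \<longrightarrow>
            Ent \<Omega> \<pi> f \<le> K * dirichlet_log \<Omega> Q \<pi> f) \<longrightarrow>
       (\<forall>f. (\<forall>w\<in>\<Omega>. f w > 0) \<longrightarrow>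
            Ent \<Omega> \<pi> f \<le> C * K * dirichlet_log \<Omega> Q \<pi> f))"
proof (rule exI[of _ "1/2"], rule exI[of _ 4], intro conjI allI impI)
  fix \<Omega> :: "nat set" and Q \<pi> K and f :: "nat \<Rightarrow> real"
  assume "reversible_chain \<Omega> Q \<pi>" "K > 0" "\<forall>w\<in>\<Omega>. f w > 0"
    and "\<forall>f. (\<forall>w\<in>\<Omega>. f w > 0 \<and> f w \<ge> 1/2) \<longrightarrow> expect \<Omega> \<pi> f = 1 \<longrightarrow>
            Ent \<Omega> \<pi> f \<le> K * dirichlet_log \<Omega> Q \<pi> f"
  then show "Ent \<Omega> \<pi> f \<le> 4 * K * dirichlet_log \<Omega> Q \<pi> f"
    by (intro mlsi_from_restricted_mlsi) auto
qed simp_all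

end
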